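(* For every integer $k \geq 2$ there is an MSyDS $\mathcal{S}_k$ with $k$ layers, in which every local function is a threshold function and every master function is \texttt{OR}, with the following properties: (1) there is no MSyDS with fewer than $k$ layers, on the same node set, in which every local function is a symmetric Boolean function and every master function is \texttt{OR}, that is equivalent to $\mathcal{S}_k$; (2) there is an MSyDS with two layers, on the same node set, in which every local function is a threshold function and every master function is \texttt{AND}, that is equivalent to $\mathcal{S}_k$.
   Context: A multilayer synchronous dynamical system (MSyDS) $\mathcal{S}$ over $\mathbb{B}=\{0,1\}$ with $k\ge 1$ layers consists of: a finite node set $V$; undirected simple graphs $G_i=(V,E_i)$, $1\le i\le k$ (all layers share the node set $V$); for each layer $i$ and node $v$ a local function $f_{i,v}$ with output in $\mathbb{B}$ whose inputs are the states of the nodes in the closed neighborhood of $v$ in $G_i$ ($v$ and its neighbors in $G_i$); and for each node $v$ a master function $\psi_v:\mathbb{B}^k\to\mathbb{B}$. A configuration is a map $\mathcal{C}:V\to\mathbb{B}$; its successor is $\mathcal{C}'$ with $\mathcal{C}'(v)=\psi_v(f_{1,v}(\mathcal{C}),\dots,f_{k,v}(\mathcal{C}))$ for all $v$ (synchronous update), where $f_{i,v}(\mathcal{C})$ is $f_{i,v}$ evaluated on the states in $\mathcal{C}$ of the closed neighborhood of $v$ in $G_i$. The phase space is the directed graph on all configurations with an arc from each configuration to its successor. Two MSyDSs on the same node set are equivalent if their phase spaces are identical. For an integer $\tau\ge 0$, the $\tau$-threshold function equals 1 iff at least $\tau$ of its inputs equal 1 (a threshold exceeding the number of inputs gives the constant-0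 function); a threshold function is a $\tau$-threshold function for some $\tau\ge 0$. A Boolean function is symmetric if its value depends only on the number of 1's among its inputs. \texttt{OR} is 1 iff at least one input is 1; \texttt{AND} is 1 iff all inputs are 1. *)

theory Defs
  imports Main
begin

text \<open>Layers are indexed by 0..<nlayers; edge i is the edge relation of layer i;
  lfun i v is the local function of node v in layer i (acting on a configuration,
  required to depend only on the closed neighbourhood of v in layer i);
  mfun v is the master function of node v (acting on the vector of layer outputs,
  required to depend only on the entries 0..<nlayers).\<close>

record 'v msyds =
  nodes :: "'v set"
  nlayers :: nat
  edge :: "nat \<Rightarrow> 'v \<Rightarrow> 'v \<Rightarrow> bool"
  lfun :: "nat \<Rightarrow> 'v \<Rightarrow> ('v \<Rightarrow> bool) \<Rightarrow> bool"
  mfun :: "'v \<Rightarrow> (nat \<Rightarrow> bool) \<Rightarrow> bool"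

definition cnbr :: "'v msyds \<Rightarrow> nat \<Rightarrow> 'v \<Rightarrow> 'v set" where
  "cnbr S i v = {u \<in> nodes S. u = v \<or> edge S i v u}"

definition is_msyds :: "'v msyds \<Rightarrow> bool" where
  "is_msyds S \<longleftrightarrow> finite (nodes S) \<and> nlayers S \<ge> 1 \<and>
     (\<forall>i<nlayers S. \<forall>u w. edge S i u w \<longrightarrow>
         u \<in> nodes S \<and> w \<in> nodes S \<and> u \<noteq> w \<and> edge S i w u) \<and>
     (\<forall>i<nlayers S. \<forall>v\<in>nodes S. \<forall>C C'. (\<forall>u\<in>cnbr S i v. C u = C' u)
         \<longrightarrow> lfun S i v C = lfun S i v C') \<and>
     (\<forall>v\<in>nodes S. \<forall>x y. (\<forall>i<nlayers S. x i = y i) \<longrightarrow> mfun S v x = mfun S v y)"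

definition successor :: "'v msyds \<Rightarrow> ('v \<Rightarrow> bool) \<Rightarrow> 'v \<Rightarrow> bool" where
  "successor S C v = mfun S v (\<lambda>i. lfun S i v C)"

text \<open>Equivalence: same node set and identical phase spaces (same successor map on
  all configurations, configurations being considered on the node set).\<close>
definition equivalent :: "'v msyds \<Rightarrow> 'v msyds \<Rightarrow> bool" where
  "equivalent S T \<longleftrightarrow> nodes S = nodes T \<and>
     (\<forall>C. \<forall>v\<in>nodes S. successor S C v = successor T C v)"

definition num_ones :: "'v msyds \<Rightarrow> nat \<Rightarrow> 'v \<Rightarrow> ('v \<Rightarrow> bool) \<Rightarrow> nat" where
  "num_ones S i v C = card {u \<in> cnbr S i v. C u}"

definition all_threshold :: "'v msyds \<Rightarrow> bool" where
  "all_threshold S \<longleftrightarrow> (\<forall>i<nlayers S. \<forall>v\<in>nodes S.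
      \<exists>\<tau>::nat. \<forall>C. lfun S i v C = (\<tau> \<le> num_ones S i v C))"

definition all_symmetric :: "'v msyds \<Rightarrow> bool" where
  "all_symmetric S \<longleftrightarrow> (\<forall>i<nlayers S. \<forall>v\<in>nodes S.
      \<exists>g::nat \<Rightarrow> bool. \<forall>C. lfun S i v C = g (num_ones S i v C))"

definition all_master_or :: "'v msyds \<Rightarrow> bool" where
  "all_master_or S \<longleftrightarrow> (\<forall>v\<in>nodes S. \<forall>x. mfun S v x = (\<exists>i<nlayers S. x i))"

definition all_master_and :: "'v msyds \<Rightarrow> bool" where
  "all_master_and S \<longleftrightarrow> (\<forall>v\<in>nodes S. \<forall>x. mfun S v x = (\<forall>i<nlayers S. x i))"

end

theory Submission
  imports Defs
begin

text \<open>On the star with centre 0 and leaves 1..k, let layer i be the single edge {0, i+1},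
  with the centre computing x(0) \<and> x(i+1) (a 2-threshold) and the leaves the constant 1.
  Under OR the centre's next state is x(0) \<and> (x(1) \<or> ... \<or> x(k)); two layers combined by
  AND compute the same, namely x(0) alone and "at least two ones" on the whole star.
  Conversely, in an OR-system with symmetric local functions computing this at the centre,
  the configuration that is 1 exactly on {0, u} fires some layer. That layer only sees the
  number of ones, so its neighbourhood of 0 cannot miss u (else the configuration 1 only on 0
  would fire) nor contain a third node w (else the one that is 1 on {w, u} would fire).
  Hence every leaf needs its own layer.\<close>

lemma two_le_card_filter_pair_iff:
  assumes "a \<noteq> b"
  shows "2 \<le> card {u \<in> {a, b}. P u} \<longleftrightarrow> P a \<and> P b"
proof -
  have "{u \<in> {a, b}. P u} = (if P a then {a} else {}) \<union> (if P b then {b} else {})"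
    by auto
  then show ?thesis
    using assms by simp
qed

lemma two_le_card_filter_iff:
  assumes "finite A" "a \<in> A" "P a"
  shows "2 \<le> card {u \<in> A. P u} \<longleftrightarrow> (\<exists>u \<in> A - {a}. P u)"
proof -
  have "{u \<in> A. P u} = insert a {u \<in> A - {a}. P u}"
    using assms(2,3) by auto
  then have "card {u \<in> A. P u} = Suc (card {u \<in> A - {a}. P u})"
    using assms(1) by simp
  then show ?thesis
    using assms(1) by (auto simp: Suc_le_eq card_gt_0_iff)
qed

lemma symmetric_lfun_eqI:
  assumes "all_symmetric T" "i < nlayers T" "v \<in> nodes T"
    and "num_ones T i v C = num_ones T i v D"
  shows "lfun T i v C = lfun T i v D"
proof -
  obtain g where "\<And>E. lfun T i v E = g (num_ones T i v E)"
    using assms(1-3) unfolding all_symmetric_def by blast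
  then show ?thesis
    using assms(4) by simp
qed

lemma successor_master_or:
  assumes "all_master_or T" "v \<in> nodes T"
  shows "successor T C v \<longleftrightarrow> (\<exists>i < nlayers T. lfun T i v C)"
  using assms by (simp add: all_master_or_def successor_def)

lemma symmetric_or_pair_layer:
  assumes sym: "all_symmetric T" and or: "all_master_or T" and v: "v \<in> nodes T"
    and succ: "\<And>C. successor T C v \<longleftrightarrow> C v \<and> (\<exists>w \<in> L. C w)"
    and "u \<in> L" "v \<notin> L"
  shows "\<exists>i < nlayers T. cnbr T i v = {v, u}"
proof -
  have "u \<noteq> v"
    using \<open>u \<in> L\<close> \<open>v \<notin> L\<close> by blast
  define C where "C x \<longleftrightarrow> x = v \<or> x = u" for x
  have "successor T C v"
    using succ \<open>u \<in> L\<close> by (auto simp: C_def)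
  then obtain i where i: "i < nlayers T" "lfun T i v C"
    using successor_master_or[OF or v] by blast
  let ?N = "cnbr T i v"
  have switched_on: "successor T D v" if "num_ones T i v D = num_ones T i v C" for D
    using i symmetric_lfun_eqI[OF sym i(1) v that] successor_master_or[OF or v] by auto
  have "v \<in> ?N"
    using v by (simp add: cnbr_def)
  have "u \<in> ?N"
  proof (rule ccontr)
    assume "u \<notin> ?N"
    define D where "D x \<longleftrightarrow> x = v" for x
    have "{x \<in> ?N. D x} = {x \<in> ?N. C x}"
      using \<open>u \<notin> ?N\<close> by (auto simp: C_def D_def)
    then have "successor T D v"
      by (intro switched_on) (simp add: num_ones_def)
    then show False
      using succ \<open>v \<notin> L\<close> by (auto simp: D_def)
  qed
  moreover have "w \<in> {v, u}" if "w \<in> ?N" for w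
  proof (rule ccontr)
    assume "w \<notin> {v, u}"
    define D where "D x \<longleftrightarrow> x = w \<or> x = u" for x
    have "{x \<in> ?N. D x} = {w, u}" "{x \<in> ?N. C x} = {v, u}"
      using \<open>w \<in> ?N\<close> \<open>u \<in> ?N\<close> \<open>v \<in> ?N\<close> by (auto simp: C_def D_def)
    then have "successor T D v"
      using \<open>w \<notin> {v, u}\<close> \<open>u \<noteq> v\<close> by (intro switched_on) (simp add: num_ones_def)
    then show False
      using succ \<open>w \<notin> {v, u}\<close> \<open>u \<noteq> v\<close> by (auto simp: D_def)
  qed
  ultimately show ?thesis
    using i(1) \<open>v \<in> ?N\<close> by blast
qed

lemma symmetric_or_card_le_nlayers:
  assumes "all_symmetric T" "all_master_or T" "v \<in> nodes T"
    and "\<And>C. successor T C v \<longleftrightarrow> C v \<and> (\<exists>w \<in> L. C w)"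
    and "v \<notin> L"
  shows "card L \<le> nlayers T"
proof -
  define layer where "layer u = (SOME i. i < nlayers T \<and> cnbr T i v = {v, u})" for u
  have layer: "layer u < nlayers T \<and> cnbr T (layer u) v = {v, u}" if "u \<in> L" for u
    unfolding layer_def using someI_ex[OF symmetric_or_pair_layer[OF assms(1-4) that assms(5)]] .
  have "inj_on layer L"
  proof
    fix u w assume "u \<in> L" "w \<in> L" "layer u = layer w"
    then have "{v, u} = {v, w}"
      using layer[OF \<open>u \<in> L\<close>] layer[OF \<open>w \<in> L\<close>] by simp
    then show "u = w"
      using \<open>u \<in> L\<close> \<open>v \<notin> L\<close> by (auto simp: doubleton_eq_iff)
  qed
  moreover have "layer ` L \<subseteq> {..<nlayers T}"
    using layer by auto
  ultimately have "card L \<le> card {..<nlayers T}"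
    by (intro card_inj_on_le) auto
  then show ?thesis
    by simp
qed

definition star_or_system :: "nat \<Rightarrow> nat msyds" where
  "star_or_system k = \<lparr>nodes = {0..k}, nlayers = k,
     edge = (\<lambda>i u w. {u, w} = {0, Suc i}),
     lfun = (\<lambda>i v C. v = 0 \<longrightarrow> C 0 \<and> C (Suc i)),
     mfun = (\<lambda>v x. \<exists>i<k. x i)\<rparr>"

definition star_and_system :: "nat \<Rightarrow> nat msyds" where
  "star_and_system k = \<lparr>nodes = {0..k}, nlayers = 2,
     edge = (\<lambda>i u w. i = 1 \<and> (u = 0 \<and> w \<in> {1..k} \<or> w = 0 \<and> u \<in> {1..k})),
     lfun = (\<lambda>i v C. v = 0 \<longrightarrow> (if i = 0 then C 0 else 2 \<le> card {u \<in> {0..k}. C u})),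
     mfun = (\<lambda>v x. x 0 \<and> x 1)\<rparr>"

lemma cnbr_star_or_system_centre: "i < k \<Longrightarrow> cnbr (star_or_system k) i 0 = {0, Suc i}"
  by (auto simp: cnbr_def star_or_system_def doubleton_eq_iff)

lemma cnbr_star_and_system_centre:
  "cnbr (star_and_system k) 0 0 = {0}"
  "cnbr (star_and_system k) 1 0 = {0..k}"
  by (auto simp: cnbr_def star_and_system_def)

lemma is_msyds_star_or_system: "0 < k \<Longrightarrow> is_msyds (star_or_system k)"
  by (auto simp: is_msyds_def star_or_system_def cnbr_def doubleton_eq_iff)

lemma is_msyds_star_and_system: "is_msyds (star_and_system k)"
proof -
  have lfun_local: "lfun (star_and_system k) i v C = lfun (star_and_system k) i v C'"
    if "i < 2" and agree: "\<forall>u \<in> cnbr (star_and_system k) i v. C u = C' u" for i v C C'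
  proof -
    have "{u \<in> {0..k}. C u} = {u \<in> {0..k}. C' u}" if "i = 1" "v = 0"
      using agree unfolding that cnbr_star_and_system_centre by auto
    moreover have "C 0 = C' 0" if "i = 0" "v = 0"
      using agree unfolding that cnbr_star_and_system_centre by auto
    ultimately show ?thesis
      using \<open>i < 2\<close> by (auto simp: star_and_system_def less_2_cases_iff)
  qed
  show ?thesis
    unfolding is_msyds_def using lfun_local by (auto simp: star_and_system_def)
qed

lemma all_threshold_star_or_system: "all_threshold (star_or_system k)"
  unfolding all_threshold_def
proof (intro allI impI ballI)
  fix i v assume "i < nlayers (star_or_system k)"
  then have "i < k"
    by (simp add: star_or_system_def)
  have "lfun (star_or_system k) i v C =
      ((if v = 0 then 2 else 0) \<le> num_ones (star_or_system k) i v C)" for C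
  proof (cases "v = 0")
    case True
    show ?thesis
      unfolding True num_ones_def cnbr_star_or_system_centre[OF \<open>i < k\<close>]
      using two_le_card_filter_pair_iff[of 0 "Suc i" C] by (simp add: star_or_system_def)
  qed (simp add: star_or_system_def)
  then show "\<exists>\<tau>. \<forall>C. lfun (star_or_system k) i v C = (\<tau> \<le> num_ones (star_or_system k) i v C)"
    by blast
qed

lemma all_threshold_star_and_system: "all_threshold (star_and_system k)"
  unfolding all_threshold_def
proof (intro allI impI ballI)
  fix i v assume "i < nlayers (star_and_system k)"
  then consider "i = 0" | "i = 1"
    by (force simp: star_and_system_def)
  then have "lfun (star_and_system k) i v C =
      ((if v = 0 then i + 1 else 0) \<le> num_ones (star_and_system k) i v C)" for C
  proof cases
    case 1
    show ?thesis
    proof (cases "v = 0")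
      case True
      show ?thesis
        unfolding 1 True num_ones_def cnbr_star_and_system_centre
        by (simp add: star_and_system_def Collect_conv_if)
    qed (simp add: star_and_system_def)
  next
    case 2
    show ?thesis
    proof (cases "v = 0")
      case True
      show ?thesis
        unfolding 2 True num_ones_def cnbr_star_and_system_centre
        by (simp add: star_and_system_def numeral_2_eq_2)
    qed (simp add: star_and_system_def)
  qed
  then show "\<exists>\<tau>. \<forall>C. lfun (star_and_system k) i v C = (\<tau> \<le> num_ones (star_and_system k) i v C)"
    by blast
qed

lemma successor_star_or_system:
  assumes "0 < k"
  shows "successor (star_or_system k) C v \<longleftrightarrow> (v = 0 \<longrightarrow> C 0 \<and> (\<exists>u \<in> {1..k}. C u))"
proof -
  have "{1..k} = Suc ` {..<k}"
    by (simp add: lessThan_atLeast0 atLeastLessThanSuc_atLeastAtMost)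
  then show ?thesis
    using assms by (auto simp: successor_def star_or_system_def)
qed

lemma successor_star_and_system:
  "successor (star_and_system k) C v \<longleftrightarrow> (v = 0 \<longrightarrow> C 0 \<and> (\<exists>u \<in> {1..k}. C u))"
proof -
  have "2 \<le> card {u \<in> {0..k}. C u} \<longleftrightarrow> (\<exists>u \<in> {1..k}. C u)" if "C 0"
  proof -
    have "{0..k} - {0} = {1..k}"
      by auto
    then show ?thesis
      using two_le_card_filter_iff[of "{0..k}" 0 C] that by simp
  qed
  then show ?thesis
    by (auto simp: successor_def star_and_system_def)
qed

theorem theorem6p2:
  fixes k :: nat
  assumes "k \<ge> 2"
  shows "\<exists>S :: nat msyds.
     is_msyds S \<and> nlayers S = k \<and> all_threshold S \<and> all_master_or S \<and>
     \<not> (\<exists>T :: nat msyds. is_msyds T \<and> nodes T = nodes S \<and> nlayers T < k \<and>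
            all_symmetric T \<and> all_master_or T \<and> equivalent T S) \<and>
     (\<exists>T :: nat msyds. is_msyds T \<and> nodes T = nodes S \<and> nlayers T = 2 \<and>
            all_threshold T \<and> all_master_and T \<and> equivalent T S)"
proof (rule exI[of _ "star_or_system k"], intro conjI)
  have "0 < k"
    using assms by simp
  then show "is_msyds (star_or_system k)"
    by (rule is_msyds_star_or_system)
  show "nlayers (star_or_system k) = k" "all_master_or (star_or_system k)"
    by (simp_all add: star_or_system_def all_master_or_def)
  show "all_threshold (star_or_system k)"
    by (rule all_threshold_star_or_system)
  show "\<not> (\<exists>T. is_msyds T \<and> nodes T = nodes (star_or_system k) \<and> nlayers T < k \<and>
           all_symmetric T \<and> all_master_or T \<and> equivalent T (star_or_system k))"
  proof
    assume "\<exists>T. is_msyds T \<and> nodes T = nodes (star_or_system k) \<and> nlayers T < k \<and>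
              all_symmetric T \<and> all_master_or T \<and> equivalent T (star_or_system k)"
    then obtain T where T: "nodes T = {0..k}" "nlayers T < k" "all_symmetric T" "all_master_or T"
        "equivalent T (star_or_system k)"
      by (auto simp: star_or_system_def)
    have "0 \<in> nodes T"
      using T(1) by simp
    then have "successor T C 0 \<longleftrightarrow> C 0 \<and> (\<exists>u \<in> {1..k}. C u)" for C
      using T(5) successor_star_or_system[OF \<open>0 < k\<close>] unfolding equivalent_def by blast
    then have "card {1..k} \<le> nlayers T"
      using T(1,3,4) by (intro symmetric_or_card_le_nlayers) auto
    then show False
      using T(2) by simp
  qed
  have "equivalent (star_and_system k) (star_or_system k)"
    by (simp add: equivalent_def successor_star_and_system successor_star_or_system[OF \<open>0 < k\<close>])
       (simp add: star_and_system_def star_or_system_def)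
  then show "\<exists>T. is_msyds T \<and> nodes T = nodes (star_or_system k) \<and> nlayers T = 2 \<and>
      all_threshold T \<and> all_master_and T \<and> equivalent T (star_or_system k)"
    by (intro exI[of _ "star_and_system k"] conjI is_msyds_star_and_system all_threshold_star_and_system)
       (auto simp: star_and_system_def star_or_system_def all_master_and_def less_2_cases_iff)
qed

end
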